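(* Let $G$ be a finite simple connected graph and $w$ a non-negative real function on the edges of $G$. Let $d_s$ be the shortest-path distance on the vertices of $G$, and define $\pi(u,u)=0$ and, for distinct vertices $u,v$, \[\pi(u,v) = \min\left\{ \frac{p(\gamma)}{p(\gamma)+1} : \gamma \text{ is a shortest path between } u \text{ and } v\right\},\] where $p(\gamma) = \prod_{e \in \gamma} w(e)$. Then $d^{\pi}_w := d_s + \pi$ is a metric on the vertex set of $G$ that refines $d_s$.
   Context: Metrics on a vertex set $V$ are regarded as functions on $V \times V$. For functions $f,f'\colon V\times V \to \mathbb{R}$, $f'$ refines $f$ if for all pairs $(x_1,x_2),(x_1',x_2') \in V\times V$ that agree in at least one coordinate, $f(x_1,x_2) < f(x_1',x_2')$ implies $f'(x_1,x_2) < f'(x_1',x_2')$. *)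

theory Defs
  imports Complex_Main
begin

definition simple_graph :: "'a set \<Rightarrow> 'a set set \<Rightarrow> bool" where
  "simple_graph V E \<longleftrightarrow> finite V \<and> (\<forall>e\<in>E. e \<subseteq> V \<and> card e = 2)"

definition walk_betw :: "'a set \<Rightarrow> 'a set set \<Rightarrow> 'a \<Rightarrow> 'a list \<Rightarrow> 'a \<Rightarrow> bool" where
  "walk_betw V E u xs v \<longleftrightarrow> xs \<noteq> [] \<and> set xs \<subseteq> V \<and> hd xs = u \<and> last xs = v \<and>
     (\<forall>i. Suc i < length xs \<longrightarrow> {xs ! i, xs ! Suc i} \<in> E)"

definition path_betw :: "'a set \<Rightarrow> 'a set set \<Rightarrow> 'a \<Rightarrow> 'a list \<Rightarrow> 'a \<Rightarrow> bool" where
  "path_betw V E u xs v \<longleftrightarrow> walk_betw V E u xs v \<and> distinct xs"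

definition connected_graph :: "'a set \<Rightarrow> 'a set set \<Rightarrow> bool" where
  "connected_graph V E \<longleftrightarrow> (\<forall>u\<in>V. \<forall>v\<in>V. \<exists>xs. walk_betw V E u xs v)"

definition dist_s :: "'a set \<Rightarrow> 'a set set \<Rightarrow> 'a \<Rightarrow> 'a \<Rightarrow> nat" where
  "dist_s V E u v = (LEAST n. \<exists>xs. path_betw V E u xs v \<and> length xs = Suc n)"

definition shortest_paths :: "'a set \<Rightarrow> 'a set set \<Rightarrow> 'a \<Rightarrow> 'a \<Rightarrow> 'a list set" where
  "shortest_paths V E u v = {xs. path_betw V E u xs v \<and> length xs = Suc (dist_s V E u v)}"

definition path_edges :: "'a list \<Rightarrow> 'a set list" where
  "path_edges xs = map (\<lambda>i. {xs ! i, xs ! Suc i}) [0..<length xs - 1]"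

definition path_weight :: "('a set \<Rightarrow> real) \<Rightarrow> 'a list \<Rightarrow> real" where
  "path_weight w xs = prod_list (map w (path_edges xs))"

definition pi_w :: "'a set \<Rightarrow> 'a set set \<Rightarrow> ('a set \<Rightarrow> real) \<Rightarrow> 'a \<Rightarrow> 'a \<Rightarrow> real" where
  "pi_w V E w u v = (if u = v then 0 else
     Min ((\<lambda>\<gamma>. path_weight w \<gamma> / (path_weight w \<gamma> + 1)) ` shortest_paths V E u v))"

definition d_pi :: "'a set \<Rightarrow> 'a set set \<Rightarrow> ('a set \<Rightarrow> real) \<Rightarrow> 'a \<Rightarrow> 'a \<Rightarrow> real" where
  "d_pi V E w u v = real (dist_s V E u v) + pi_w V E w u v"

definition is_metric_on :: "'a set \<Rightarrow> ('a \<Rightarrow> 'a \<Rightarrow> real) \<Rightarrow> bool" where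
  "is_metric_on V d \<longleftrightarrow>
     (\<forall>x\<in>V. \<forall>y\<in>V. d x y \<ge> 0 \<and> (d x y = 0 \<longleftrightarrow> x = y) \<and> d x y = d y x) \<and>
     (\<forall>x\<in>V. \<forall>y\<in>V. \<forall>z\<in>V. d x z \<le> d x y + d y z)"

definition refines :: "'a set \<Rightarrow> ('a \<Rightarrow> 'a \<Rightarrow> real) \<Rightarrow> ('a \<Rightarrow> 'a \<Rightarrow> real) \<Rightarrow> bool" where
  "refines V f f' \<longleftrightarrow> (\<forall>x1\<in>V. \<forall>x2\<in>V. \<forall>y1\<in>V. \<forall>y2\<in>V.
      (x1 = y1 \<or> x2 = y2) \<longrightarrow> f x1 x2 < f y1 y2 \<longrightarrow> f' x1 x2 < f' y1 y2)"

end

theory Submission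
  imports Defs
begin

text \<open>
  Since \<open>t / (t + 1) \<in> [0, 1)\<close> for \<open>t \<ge> 0\<close>, the perturbation \<open>\<pi>\<close> is smaller than the gap
  between distinct values of the integer metric \<open>d\<^sub>s\<close>; this gives the refinement and reduces the
  triangle inequality to triples \<open>x, y, z\<close> with \<open>y\<close> on a geodesic from \<open>x\<close> to \<open>z\<close>. There the
  concatenation of shortest paths \<open>x \<leadsto> y\<close> and \<open>y \<leadsto> z\<close> is a shortest path \<open>x \<leadsto> z\<close> whose
  weight is the product of the two weights, and \<open>ab/(ab+1) \<le> a/(a+1) + b/(b+1)\<close> for
  \<open>a, b \<ge> 0\<close>.
\<close>

lemma walk_betw_iff_successively:
  "walk_betw V E u xs v \<longleftrightarrow> xs \<noteq> [] \<and> set xs \<subseteq> V \<and> hd xs = u \<and> last xs = v \<and>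
     successively (\<lambda>x y. {x, y} \<in> E) xs"
  unfolding walk_betw_def successively_conv_nth by blast

lemma walk_betw_not_Nil: "walk_betw V E u xs v \<Longrightarrow> xs \<noteq> []"
  by (simp add: walk_betw_def)

lemma walk_betw_append:
  assumes "walk_betw V E x xs y" "walk_betw V E y ys z"
  shows "walk_betw V E x (xs @ tl ys) z"
proof -
  obtain ys' where "ys = y # ys'"
    using assms(2) by (cases ys) (auto simp: walk_betw_def)
  then show ?thesis
    using assms unfolding walk_betw_iff_successively
    by (auto simp: successively_append_iff successively_Cons hd_append last_append)
qed

lemma walk_betw_rev: "walk_betw V E x xs y \<Longrightarrow> walk_betw V E y (rev xs) x"
  unfolding walk_betw_iff_successively by (auto simp: hd_rev last_rev insert_commute)

lemma path_betw_rev: "path_betw V E x xs y \<Longrightarrow> path_betw V E y (rev xs) x"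
  using walk_betw_rev unfolding path_betw_def by auto

lemma walk_betw_shorten:
  assumes "walk_betw V E u xs v" "\<not> distinct xs"
  obtains ys where "walk_betw V E u ys v" "length ys < length xs"
proof -
  obtain a b c y where xs: "xs = a @ [y] @ b @ [y] @ c"
    using not_distinct_decomp assms(2) by blast
  have "successively (\<lambda>x y. {x, y} \<in> E) (a @ y # c)"
    using assms(1) unfolding xs walk_betw_iff_successively
    by (auto simp: successively_append_iff successively_Cons)
  moreover have "hd (a @ y # c) = hd xs" "last (a @ y # c) = last xs" "set (a @ y # c) \<subseteq> set xs"
    by (cases a) (auto simp: xs)
  ultimately have "walk_betw V E u (a @ y # c) v"
    using assms(1) by (auto simp: walk_betw_iff_successively)
  then show ?thesis
    using that by (simp add: xs)
qed

lemma walk_betw_imp_path_betw: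
  assumes "walk_betw V E u xs v"
  obtains ys where "path_betw V E u ys v" "length ys \<le> length xs"
  using assms
proof (induction "length xs" arbitrary: xs rule: less_induct)
  case less
  show ?case
  proof (cases "distinct xs")
    case True
    then show ?thesis
      using less.prems by (auto simp: path_betw_def)
  next
    case False
    then obtain ys where "walk_betw V E u ys v" "length ys < length xs"
      using walk_betw_shorten[OF less.prems(2)] by blast
    then show ?thesis
      using less.hyps less.prems(1) by fastforce
  qed
qed

lemma dist_s_le_walk_length:
  assumes "walk_betw V E u xs v"
  shows "Suc (dist_s V E u v) \<le> length xs"
proof -
  obtain ys where ys: "path_betw V E u ys v" "length ys \<le> length xs"
    using walk_betw_imp_path_betw[OF assms] .
  then obtain n where n: "length ys = Suc n"
    using walk_betw_not_Nil[of V E u ys v] by (cases ys) (simp_all add: path_betw_def)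
  have "dist_s V E u v \<le> n"
    unfolding dist_s_def by (rule Least_le) (use ys n in blast)
  then show ?thesis
    using ys n by simp
qed

lemma shortest_paths_nonempty:
  assumes "connected_graph V E" "u \<in> V" "v \<in> V"
  shows "shortest_paths V E u v \<noteq> {}"
proof -
  obtain xs where "walk_betw V E u xs v"
    using assms unfolding connected_graph_def by blast
  then obtain ys where ys: "path_betw V E u ys v" "length ys \<le> length xs"
    by (rule walk_betw_imp_path_betw)
  then have "\<exists>n xs. path_betw V E u xs v \<and> length xs = Suc n"
    using walk_betw_not_Nil[of V E u ys v]
    by (intro exI[of _ "length ys - 1"] exI[of _ ys]) (simp add: path_betw_def)
  then have "\<exists>xs. path_betw V E u xs v \<and> length xs = Suc (dist_s V E u v)"
    unfolding dist_s_def by (rule LeastI_ex)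
  then show ?thesis
    by (auto simp: shortest_paths_def)
qed

lemma finite_shortest_paths:
  assumes "finite V"
  shows "finite (shortest_paths V E u v)"
proof (rule finite_subset)
  show "shortest_paths V E u v \<subseteq> {xs. set xs \<subseteq> V \<and> length xs = Suc (dist_s V E u v)}"
    unfolding shortest_paths_def path_betw_def walk_betw_def by blast
  show "finite {xs. set xs \<subseteq> V \<and> length xs = Suc (dist_s V E u v)}"
    using assms by (rule finite_lists_length_eq)
qed

lemma shortest_paths_walk_betw:
  "xs \<in> shortest_paths V E u v \<Longrightarrow> walk_betw V E u xs v"
  by (simp add: shortest_paths_def path_betw_def)

lemma shortest_paths_length:
  "xs \<in> shortest_paths V E u v \<Longrightarrow> length xs = Suc (dist_s V E u v)"
  by (simp add: shortest_paths_def)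

lemma dist_s_eq_0_iff:
  assumes "connected_graph V E" "u \<in> V" "v \<in> V"
  shows "dist_s V E u v = 0 \<longleftrightarrow> u = v"
proof
  assume "dist_s V E u v = 0"
  moreover obtain xs where "xs \<in> shortest_paths V E u v"
    using shortest_paths_nonempty[OF assms] by blast
  ultimately show "u = v"
    by (cases xs) (auto simp: shortest_paths_def path_betw_def walk_betw_def)
next
  assume "u = v"
  then show "dist_s V E u v = 0"
    using dist_s_le_walk_length[of V E u "[u]" u] assms(2) by (simp add: walk_betw_def)
qed

lemma dist_s_commute:
  assumes "connected_graph V E" "u \<in> V" "v \<in> V"
  shows "dist_s V E v u = dist_s V E u v"
proof -
  have le: "dist_s V E b a \<le> dist_s V E a b" if ab: "a \<in> V" "b \<in> V" for a b
  proof -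
    obtain xs where "xs \<in> shortest_paths V E a b"
      using shortest_paths_nonempty[OF assms(1) ab] by blast
    then have "walk_betw V E b (rev xs) a" "length (rev xs) = Suc (dist_s V E a b)"
      by (simp_all add: walk_betw_rev shortest_paths_walk_betw shortest_paths_length)
    then show ?thesis
      using dist_s_le_walk_length by fastforce
  qed
  show ?thesis
    using le[of u v] le[of v u] assms by simp
qed

lemma rev_in_shortest_paths:
  assumes "connected_graph V E" "u \<in> V" "v \<in> V" "xs \<in> shortest_paths V E u v"
  shows "rev xs \<in> shortest_paths V E v u"
  using assms(4) path_betw_rev[of V E u xs v] dist_s_commute[OF assms(1-3)]
  by (simp add: shortest_paths_def)

lemma shortest_paths_commute:
  assumes "connected_graph V E" "u \<in> V" "v \<in> V"
  shows "shortest_paths V E v u = rev ` shortest_paths V E u v"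
proof
  show "rev ` shortest_paths V E u v \<subseteq> shortest_paths V E v u"
    using rev_in_shortest_paths[OF assms] by blast
  show "shortest_paths V E v u \<subseteq> rev ` shortest_paths V E u v"
    using rev_in_shortest_paths[OF assms(1,3,2)] by (metis image_eqI rev_rev_ident subsetI)
qed

lemma shortest_paths_append:
  assumes "xs \<in> shortest_paths V E x y" "ys \<in> shortest_paths V E y z"
  shows "length (xs @ tl ys) = Suc (dist_s V E x y + dist_s V E y z)"
    and "walk_betw V E x (xs @ tl ys) z"
  using assms shortest_paths_length[OF assms(1)] shortest_paths_length[OF assms(2)]
  by (auto intro: walk_betw_append shortest_paths_walk_betw)

lemma dist_s_triangle:
  assumes "connected_graph V E" "x \<in> V" "y \<in> V" "z \<in> V"
  shows "dist_s V E x z \<le> dist_s V E x y + dist_s V E y z"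
proof -
  obtain xs ys where "xs \<in> shortest_paths V E x y" "ys \<in> shortest_paths V E y z"
    using shortest_paths_nonempty[OF assms(1,2,3)] shortest_paths_nonempty[OF assms(1,3,4)]
    by blast
  from shortest_paths_append[OF this] show ?thesis
    using dist_s_le_walk_length[of V E x "xs @ tl ys" z] by simp
qed

lemma shortest_paths_append_geodesic:
  assumes "xs \<in> shortest_paths V E x y" "ys \<in> shortest_paths V E y z"
    and "dist_s V E x z = dist_s V E x y + dist_s V E y z"
  shows "xs @ tl ys \<in> shortest_paths V E x z"
proof -
  note walk = shortest_paths_append(2)[OF assms(1,2)]
  have len: "length (xs @ tl ys) = Suc (dist_s V E x z)"
    using shortest_paths_append(1)[OF assms(1,2)] assms(3) by simp
  have "distinct (xs @ tl ys)"
  proof (rule ccontr)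
    assume "\<not> distinct (xs @ tl ys)"
    then obtain zs where "walk_betw V E x zs z" "length zs < length (xs @ tl ys)"
      using walk_betw_shorten[OF walk] by blast
    then show False
      using dist_s_le_walk_length len by fastforce
  qed
  then show ?thesis
    using walk len by (simp add: shortest_paths_def path_betw_def)
qed

lemma is_metric_on_dist_s:
  assumes "connected_graph V E"
  shows "is_metric_on V (\<lambda>u v. real (dist_s V E u v))"
  unfolding is_metric_on_def
proof (intro conjI ballI)
  fix x y z assume "x \<in> V" "y \<in> V" "z \<in> V"
  then show "real (dist_s V E x z) \<le> real (dist_s V E x y) + real (dist_s V E y z)"
    using dist_s_triangle[OF assms] by (simp flip: of_nat_add)
qed (simp_all add: dist_s_eq_0_iff[OF assms] dist_s_commute[OF assms])

lemma path_edges_simps [simp]: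
  "path_edges [] = []" "path_edges [x] = []"
  "path_edges (x # y # zs) = {x, y} # path_edges (y # zs)"
  unfolding path_edges_def
  by (simp_all add: upt_conv_Cons map_Suc_upt[symmetric] del: upt_Suc)

lemma path_weight_simps [simp]:
  "path_weight w [] = 1" "path_weight w [x] = 1"
  "path_weight w (x # y # zs) = w {x, y} * path_weight w (y # zs)"
  unfolding path_weight_def by simp_all

lemma path_weight_append:
  assumes "xs \<noteq> []" "ys \<noteq> []" "last xs = hd ys"
  shows "path_weight w (xs @ tl ys) = path_weight w xs * path_weight w ys"
  using assms by (induction xs rule: induct_list012) (auto simp: neq_Nil_conv)

lemma path_weight_rev: "path_weight w (rev xs) = path_weight w xs"
proof (induction xs rule: induct_list012)
  case (3 x y zs)
  have "path_weight w (rev (x # y # zs)) = path_weight w (rev (y # zs) @ tl [y, x])"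
    by simp
  also have "\<dots> = path_weight w (y # zs) * w {x, y}"
    using 3 by (subst path_weight_append) (auto simp: last_rev insert_commute)
  finally show ?case
    by simp
qed simp_all

lemma path_weight_nonneg:
  assumes "walk_betw V E u xs v" "\<forall>e\<in>E. w e \<ge> 0"
  shows "path_weight w xs \<ge> 0"
proof -
  have "successively (\<lambda>x y. {x, y} \<in> E) xs"
    using assms(1) by (simp add: walk_betw_iff_successively)
  then show ?thesis
    using assms(2) by (induction xs rule: induct_list012) simp_all
qed

lemma frac_plus_one_bounds: "(t::real) \<ge> 0 \<Longrightarrow> 0 \<le> t / (t + 1) \<and> t / (t + 1) < 1"
  by simp

lemma frac_plus_one_mult_le:
  fixes a b :: real
  assumes "a \<ge> 0" "b \<ge> 0"
  shows "a * b / (a * b + 1) \<le> a / (a + 1) + b / (b + 1)"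
proof -
  have pos: "a * b + 1 > 0" "(a + 1) * (b + 1) > 0"
    using assms by (simp_all add: add_nonneg_pos)
  \<comment> \<open>the right-hand side exceeds the left one by \<open>a\<^sup>2b\<^sup>2 + ab + a + b\<close>\<close>
  have "a * b * ((a + 1) * (b + 1)) \<le> (a * (b + 1) + b * (a + 1)) * (a * b + 1)"
    using assms by (simp add: algebra_simps)
  then have "a * b / (a * b + 1) \<le> (a * (b + 1) + b * (a + 1)) / ((a + 1) * (b + 1))"
    using pos by (simp add: divide_le_eq le_divide_eq mult.commute)
  also have "\<dots> = a / (a + 1) + b / (b + 1)"
    using assms by (simp add: add_frac_eq)
  finally show ?thesis .
qed

lemma pi_w_self [simp]: "pi_w V E w u u = 0"
  by (simp add: pi_w_def)

lemma pi_w_le: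
  assumes "finite V" "u \<noteq> v" "\<gamma> \<in> shortest_paths V E u v"
  shows "pi_w V E w u v \<le> path_weight w \<gamma> / (path_weight w \<gamma> + 1)"
  using assms finite_shortest_paths[OF assms(1)] by (simp add: pi_w_def)

lemma pi_w_attained:
  assumes "finite V" "connected_graph V E" "u \<in> V" "v \<in> V" "u \<noteq> v"
  obtains \<gamma> where "\<gamma> \<in> shortest_paths V E u v"
    "pi_w V E w u v = path_weight w \<gamma> / (path_weight w \<gamma> + 1)"
proof -
  let ?S = "(\<lambda>\<gamma>. path_weight w \<gamma> / (path_weight w \<gamma> + 1)) ` shortest_paths V E u v"
  have "Min ?S \<in> ?S"
    using finite_shortest_paths[OF assms(1)] shortest_paths_nonempty[OF assms(2-4)]
    by (intro Min_in) simp_all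
  then show ?thesis
    using that assms(5) by (auto simp: pi_w_def)
qed

lemma pi_w_bounds:
  assumes "finite V" "connected_graph V E" "\<forall>e\<in>E. w e \<ge> 0" "u \<in> V" "v \<in> V"
  shows "0 \<le> pi_w V E w u v \<and> pi_w V E w u v < 1"
proof (cases "u = v")
  case False
  then obtain \<gamma> where "\<gamma> \<in> shortest_paths V E u v"
    "pi_w V E w u v = path_weight w \<gamma> / (path_weight w \<gamma> + 1)"
    using pi_w_attained assms by metis
  moreover from this(1) have "path_weight w \<gamma> \<ge> 0"
    using assms(3) by (intro path_weight_nonneg shortest_paths_walk_betw)
  ultimately show ?thesis
    using frac_plus_one_bounds by simp
qed simp

lemma pi_w_commute:
  assumes "connected_graph V E" "u \<in> V" "v \<in> V"
  shows "pi_w V E w v u = pi_w V E w u v"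
  by (simp add: pi_w_def shortest_paths_commute[OF assms] image_image path_weight_rev)

lemma pi_w_triangle_geodesic:
  assumes "finite V" "connected_graph V E" "\<forall>e\<in>E. w e \<ge> 0" "x \<in> V" "y \<in> V" "z \<in> V"
    and "dist_s V E x z = dist_s V E x y + dist_s V E y z"
  shows "pi_w V E w x z \<le> pi_w V E w x y + pi_w V E w y z"
proof (cases "x = y \<or> y = z \<or> x = z")
  case True
  then show ?thesis
    using pi_w_bounds[OF assms(1-3)] assms(4-6) by auto
next
  case False
  obtain \<gamma>\<^sub>1 where \<gamma>\<^sub>1: "\<gamma>\<^sub>1 \<in> shortest_paths V E x y"
    "pi_w V E w x y = path_weight w \<gamma>\<^sub>1 / (path_weight w \<gamma>\<^sub>1 + 1)"
    using pi_w_attained[OF assms(1,2,4,5)] False by metis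
  obtain \<gamma>\<^sub>2 where \<gamma>\<^sub>2: "\<gamma>\<^sub>2 \<in> shortest_paths V E y z"
    "pi_w V E w y z = path_weight w \<gamma>\<^sub>2 / (path_weight w \<gamma>\<^sub>2 + 1)"
    using pi_w_attained[OF assms(1,2,5,6)] False by metis
  have walks: "walk_betw V E x \<gamma>\<^sub>1 y" "walk_betw V E y \<gamma>\<^sub>2 z"
    using \<gamma>\<^sub>1(1) \<gamma>\<^sub>2(1) by (simp_all add: shortest_paths_walk_betw)
  then have weight: "path_weight w (\<gamma>\<^sub>1 @ tl \<gamma>\<^sub>2) = path_weight w \<gamma>\<^sub>1 * path_weight w \<gamma>\<^sub>2"
    by (intro path_weight_append) (auto simp: walk_betw_def)
  have "pi_w V E w x z
      \<le> path_weight w (\<gamma>\<^sub>1 @ tl \<gamma>\<^sub>2) / (path_weight w (\<gamma>\<^sub>1 @ tl \<gamma>\<^sub>2) + 1)"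
    using False assms(1,7) \<gamma>\<^sub>1(1) \<gamma>\<^sub>2(1) by (intro pi_w_le shortest_paths_append_geodesic) auto
  also have "\<dots> \<le> pi_w V E w x y + pi_w V E w y z"
    unfolding weight \<gamma>\<^sub>1(2) \<gamma>\<^sub>2(2)
    using walks assms(3) by (intro frac_plus_one_mult_le path_weight_nonneg)
  finally show ?thesis .
qed

lemma is_metric_on_add_perturbation:
  fixes d :: "'a \<Rightarrow> 'a \<Rightarrow> nat" and p :: "'a \<Rightarrow> 'a \<Rightarrow> real"
  assumes "is_metric_on V (\<lambda>x y. real (d x y))"
    and "\<And>x y. x \<in> V \<Longrightarrow> y \<in> V \<Longrightarrow> 0 \<le> p x y \<and> p x y < 1 \<and> p y x = p x y"
    and "\<And>x. x \<in> V \<Longrightarrow> p x x = 0"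
    and "\<And>x y z. x \<in> V \<Longrightarrow> y \<in> V \<Longrightarrow> z \<in> V \<Longrightarrow> d x z = d x y + d y z \<Longrightarrow>
      p x z \<le> p x y + p y z"
  shows "is_metric_on V (\<lambda>x y. real (d x y) + p x y)"
  unfolding is_metric_on_def
proof (intro conjI ballI)
  fix x y assume "x \<in> V" "y \<in> V"
  then show "0 \<le> real (d x y) + p x y" "real (d x y) + p x y = real (d y x) + p y x"
    and "real (d x y) + p x y = 0 \<longleftrightarrow> x = y"
    using assms(1-3) unfolding is_metric_on_def by (auto simp: add_nonneg_eq_0_iff)
next
  fix x y z assume xyz: "x \<in> V" "y \<in> V" "z \<in> V"
  have "d x z \<le> d x y + d y z"
    using assms(1) xyz unfolding is_metric_on_def by (simp flip: of_nat_add)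
  then consider "d x z = d x y + d y z" | "d x z + 1 \<le> d x y + d y z"
    by linarith
  then show "real (d x z) + p x z \<le> real (d x y) + p x y + (real (d y z) + p y z)"
  proof cases
    case 1
    then show ?thesis
      using assms(4)[OF xyz] by simp
  next
    case 2
    then have "real (d x z) + 1 \<le> real (d x y) + real (d y z)"
      by (simp flip: of_nat_add of_nat_Suc)
    then show ?thesis
      using assms(2)[OF xyz(1,2)] assms(2)[OF xyz(2,3)] assms(2)[OF xyz(1,3)] by linarith
  qed
qed

lemma refines_add_perturbation:
  fixes d :: "'a \<Rightarrow> 'a \<Rightarrow> nat" and p :: "'a \<Rightarrow> 'a \<Rightarrow> real"
  assumes "\<And>x y. x \<in> V \<Longrightarrow> y \<in> V \<Longrightarrow> 0 \<le> p x y \<and> p x y < 1"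
  shows "refines V (\<lambda>x y. real (d x y)) (\<lambda>x y. real (d x y) + p x y)"
  unfolding refines_def
proof (intro ballI impI)
  \<comment> \<open>the pairs need not agree in a coordinate: the integer gap alone absorbs \<open>p\<close>\<close>
  fix x\<^sub>1 x\<^sub>2 y\<^sub>1 y\<^sub>2 assume "x\<^sub>1 \<in> V" "x\<^sub>2 \<in> V" "y\<^sub>1 \<in> V" "y\<^sub>2 \<in> V"
    and "real (d x\<^sub>1 x\<^sub>2) < real (d y\<^sub>1 y\<^sub>2)"
  moreover from this(5) have "real (d x\<^sub>1 x\<^sub>2) + 1 \<le> real (d y\<^sub>1 y\<^sub>2)"
    by simp
  ultimately show "real (d x\<^sub>1 x\<^sub>2) + p x\<^sub>1 x\<^sub>2 < real (d y\<^sub>1 y\<^sub>2) + p y\<^sub>1 y\<^sub>2"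
    using assms[of x\<^sub>1 x\<^sub>2] assms[of y\<^sub>1 y\<^sub>2] by linarith
qed

theorem proposition5:
  fixes V :: "'a set" and E :: "'a set set" and w :: "'a set \<Rightarrow> real"
  assumes "simple_graph V E" and "connected_graph V E"
    and "\<forall>e\<in>E. w e \<ge> 0"
  shows "is_metric_on V (d_pi V E w) \<and>
         refines V (\<lambda>u v. real (dist_s V E u v)) (d_pi V E w)"
proof -
  have "finite V"
    using assms(1) by (simp add: simple_graph_def)
  note pi_w_bounds = pi_w_bounds[OF this assms(2,3)]
  have d_pi: "d_pi V E w = (\<lambda>u v. real (dist_s V E u v) + pi_w V E w u v)"
    by (simp add: d_pi_def fun_eq_iff)
  have "is_metric_on V (d_pi V E w)"
    unfolding d_pi
    by (rule is_metric_on_add_perturbation[OF is_metric_on_dist_s[OF assms(2)]])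
      (simp_all add: pi_w_bounds pi_w_commute[OF assms(2)]
        pi_w_triangle_geodesic[OF \<open>finite V\<close> assms(2,3)])
  moreover have "refines V (\<lambda>u v. real (dist_s V E u v)) (d_pi V E w)"
    unfolding d_pi by (rule refines_add_perturbation) (simp add: pi_w_bounds)
  ultimately show ?thesis ..
qed

end
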